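(* Let $n\ge1$ and let $\alpha=(a_n,\ldots,a_1)$ be a restricted sequence. Write $e'_\alpha=\sum_{\beta}P_\beta\, e_\beta$ with $P_\beta\in\mathbb{Q}(q)$, the sum over restricted sequences $\beta$ of length $n$. Then $P_\beta\neq0$ if and only if $\beta\preccurlyeq\alpha$.
   Context: $D_n$: non-crossing perfect matchings of $\{1,\ldots,2n\}$ (non-crossing $n$-chord diagrams), $D_0=\{\phi\}$. For $1\le k\le 2n+1$, $l_k:D_n\to D_{n+1}$: $l_k(\alpha)$ matches $k$ with $k+1$, old point $i$ becomes $i$ if $i<k$ and $i+2$ if $i\ge k$. Restricted sequence of $\alpha\in D_n$: let $k_n$ be the smallest $k$ with $k$ matched to $k+1$; it is $(k_n,k_{n-1},\ldots,k_1)$ with $(k_{n-1},\ldots,k_1)$ the restricted sequence of $\alpha$ with that arc removed (empty for $\phi$). This is a bijection from $D_n$ to restricted sequences of length $n$; $e_{(a_n,\ldots,a_1)}$ denotes the corresponding diagram. $\preccurlyeq$ is the coordinatewise order on restricted sequences: $(b_n,\ldots,b_1)\preccurlyeq(a_n,\ldots,a_1)$ iff $b_i\le a_i$ for all $i$. $V_n$: $\mathbb{Q}(q)$-vector space with basis $D_n$, $l_k$ extended linearly. $\Delta_{-1}=0$, $\Delta_0=1$, $\Delta_k=q\Delta_{k-1}-\Delta_{k-2}$. $e'$: $e'_{(1)}=e_{(1)}$; for $n\ge2$, $e'_{(a_n,\ldots,a_1)}=l_{a_n}(e'_{(a_{n-1},\ldots,a_1)})-\frac{\Delta_{a_n-2}}{\Delta_{a_n-1}}e'_{(a_n-1,a_{n-1},\ldots,a_1)}$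 if $a_n\ge2$, and $e'_{(1,a_{n-1},\ldots,a_1)}=l_1(e'_{(a_{n-1},\ldots,a_1)})$. *)

theory Defs
  imports "HOL-Computational_Algebra.Polynomial" "HOL-Computational_Algebra.Fraction_Field"
begin

text \<open>A chord diagram is a set of arcs (i,j) with i < j.\<close>
type_synonym diagram = "(nat \<times> nat) set"

definition Dn :: "nat \<Rightarrow> diagram set" where
  "Dn n = {\<alpha>. (\<forall>(i,j)\<in>\<alpha>. 1 \<le> i \<and> i < j \<and> j \<le> 2*n)
            \<and> (\<forall>p\<in>{1..2*n}. \<exists>!e. e \<in> \<alpha> \<and> (fst e = p \<or> snd e = p))
            \<and> (\<forall>(a,c)\<in>\<alpha>. \<forall>(b,d)\<in>\<alpha>. \<not> (a < b \<and> b < c \<and> c < d))}"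

definition sh :: "nat \<Rightarrow> nat \<Rightarrow> nat" where
  "sh k i = (if i < k then i else i + 2)"

definition lk :: "nat \<Rightarrow> diagram \<Rightarrow> diagram" where
  "lk k \<alpha> = insert (k, k+1) ((\<lambda>(i,j). (sh k i, sh k j)) ` \<alpha>)"

definition ush :: "nat \<Rightarrow> nat \<Rightarrow> nat" where
  "ush k i = (if i < k then i else i - 2)"

definition remove_arc :: "nat \<Rightarrow> diagram \<Rightarrow> diagram" where
  "remove_arc k \<alpha> = (\<lambda>(i,j). (ush k i, ush k j)) ` (\<alpha> - {(k, k+1)})"

text \<open>Restricted sequence of a diagram in D_n, as the list [k_n, ..., k_1].\<close>
fun rseq :: "nat \<Rightarrow> diagram \<Rightarrow> nat list" where
  "rseq 0 \<alpha> = []"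
| "rseq (Suc n) \<alpha> = (let k = (LEAST k. (k, k+1) \<in> \<alpha>) in k # rseq n (remove_arc k \<alpha>))"

text \<open>Restricted sequences of length n (image of the bijection).\<close>
definition RS :: "nat \<Rightarrow> nat list set" where
  "RS n = rseq n ` Dn n"

definition edia :: "nat list \<Rightarrow> diagram" where
  "edia \<beta> = (THE \<alpha>. \<alpha> \<in> Dn (length \<beta>) \<and> rseq (length \<beta>) \<alpha> = \<beta>)"

text \<open>The field Q(q) of rational functions, and its indeterminate q.\<close>
type_synonym Qq = "rat poly fract"

definition qq :: Qq where "qq = Fract [:0, 1:] 1"

fun Delta :: "nat \<Rightarrow> Qq" where
  "Delta 0 = 1"
| "Delta (Suc 0) = qq"
| "Delta (Suc (Suc k)) = qq * Delta (Suc k) - Delta k"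

text \<open>Vectors of V_n: coefficient functions on diagrams (supported on D_n).\<close>
definition basis :: "diagram \<Rightarrow> diagram \<Rightarrow> Qq" where
  "basis \<alpha> = (\<lambda>\<gamma>. if \<gamma> = \<alpha> then 1 else 0)"

definition lin_l :: "nat \<Rightarrow> nat \<Rightarrow> (diagram \<Rightarrow> Qq) \<Rightarrow> diagram \<Rightarrow> Qq" where
  "lin_l n k v = (\<lambda>\<delta>. \<Sum>\<gamma>\<in>Dn n. if lk k \<gamma> = \<delta> then v \<gamma> else 0)"

function eprime :: "nat list \<Rightarrow> diagram \<Rightarrow> Qq" where
  "eprime [] = basis {}"
| "eprime [a] = basis (edia [a])"
| "eprime (a # b # rest) =
     (if 2 \<le> a then
        (\<lambda>\<gamma>. lin_l (length (b # rest)) a (eprime (b # rest)) \<gamma>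
              - (Delta (a - 2) / Delta (a - 1)) * eprime ((a - 1) # b # rest) \<gamma>)
      else lin_l (length (b # rest)) 1 (eprime (b # rest)))"
  by pat_completeness auto
termination
  by (relation "measures [length, \<lambda>xs. hd xs]") auto

end

theory Submission
  imports Defs
begin

text \<open>
  Write |\<gamma>| for the entry sum of a restricted sequence. The coefficient of e_\<beta> in e'_\<alpha>,
  multiplied by (-1)^(|\<alpha>| + |\<beta>|), is nonnegative, and positive exactly when \<beta> \<preceq> \<alpha>;
  this is proved along the recursion defining e'. The restricted sequence of l_k(\<gamma>) arises
  from that of \<gamma> by inserting k (and lowering by 2 the inserted value each time it passes an
  entry), so its entry sum changes by k modulo 2. Hence the signed contribution of
  l_a(e'_(a_(n-1),...,a_1)) is nonnegative, positive on all \<beta> \<preceq> \<alpha> with first entry a, and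
  zero outside {\<beta>. \<beta> \<preceq> \<alpha>}. The correction term -(\<Delta>_(a-2)/\<Delta>_(a-1)) e'_(a-1,...,a_1) lowers
  |\<alpha>| by one, so with \<Delta>_k > 0 its signed contribution is nonnegative as well and covers the
  \<beta> \<preceq> \<alpha> with first entry below a. Both contributions being nonnegative, nothing cancels.
\<close>

section \<open>Non-crossing matchings\<close>

lemma Dn_arcD: "\<delta> \<in> Dn n \<Longrightarrow> (i, j) \<in> \<delta> \<Longrightarrow> 1 \<le> i \<and> i < j \<and> j \<le> 2 * n"
  unfolding Dn_def by blast

lemma Dn_point_covered:
  assumes "\<delta> \<in> Dn n" "1 \<le> p" "p \<le> 2 * n"
  shows "\<exists>e\<in>\<delta>. fst e = p \<or> snd e = p"
proof -
  have "p \<in> {1..2 * n}" using assms by simp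
  then have "\<exists>!e. e \<in> \<delta> \<and> (fst e = p \<or> snd e = p)" using assms(1) unfolding Dn_def by blast
  then show ?thesis by blast
qed

lemma Dn_arc_unique:
  assumes "\<delta> \<in> Dn n" "e1 \<in> \<delta>" "e2 \<in> \<delta>" "fst e1 = p \<or> snd e1 = p" "fst e2 = p \<or> snd e2 = p"
  shows "e1 = e2"
proof -
  have "1 \<le> fst e1 \<and> fst e1 < snd e1 \<and> snd e1 \<le> 2 * n"
    using Dn_arcD[OF assms(1), of "fst e1" "snd e1"] assms(2) by simp
  then have "p \<in> {1..2 * n}" using assms(4) by auto
  then have "\<exists>!e. e \<in> \<delta> \<and> (fst e = p \<or> snd e = p)" using assms(1) unfolding Dn_def by blast
  then show ?thesis using assms(2-5) by blast
qed

lemma Dn_noncrossing: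
  "\<delta> \<in> Dn n \<Longrightarrow> (a, c) \<in> \<delta> \<Longrightarrow> (b, d) \<in> \<delta> \<Longrightarrow> \<not> (a < b \<and> b < c \<and> c < d)"
  unfolding Dn_def by fast

lemma DnI:
  assumes "\<And>i j. (i, j) \<in> \<delta> \<Longrightarrow> 1 \<le> i \<and> i < j \<and> j \<le> 2 * n"
    and "\<And>p. 1 \<le> p \<Longrightarrow> p \<le> 2 * n \<Longrightarrow> \<exists>e\<in>\<delta>. fst e = p \<or> snd e = p"
    and "\<And>e1 e2 p. e1 \<in> \<delta> \<Longrightarrow> e2 \<in> \<delta> \<Longrightarrow> fst e1 = p \<or> snd e1 = p
          \<Longrightarrow> fst e2 = p \<or> snd e2 = p \<Longrightarrow> e1 = e2"
    and "\<And>a b c d. (a, c) \<in> \<delta> \<Longrightarrow> (b, d) \<in> \<delta> \<Longrightarrow> \<not> (a < b \<and> b < c \<and> c < d)"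
  shows "\<delta> \<in> Dn n"
proof -
  have "\<exists>!e. e \<in> \<delta> \<and> (fst e = p \<or> snd e = p)" if "p \<in> {1..2 * n}" for p
  proof -
    from that have "1 \<le> p" "p \<le> 2 * n" by auto
    then obtain e where "e \<in> \<delta>" "fst e = p \<or> snd e = p" using assms(2) by blast
    then show ?thesis using assms(3) by blast
  qed
  moreover have "\<forall>(i, j)\<in>\<delta>. 1 \<le> i \<and> i < j \<and> j \<le> 2 * n" using assms(1) by blast
  moreover have "\<forall>(a, c)\<in>\<delta>. \<forall>(b, d)\<in>\<delta>. \<not> (a < b \<and> b < c \<and> c < d)" using assms(4) by blast
  ultimately show ?thesis unfolding Dn_def by blast
qed

lemma Dn_arc_disjoint:
  assumes "\<delta> \<in> Dn n" "(k, l) \<in> \<delta>" "(x, y) \<in> \<delta>" "(x, y) \<noteq> (k, l)"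
  shows "x \<noteq> k \<and> x \<noteq> l \<and> y \<noteq> k \<and> y \<noteq> l"
proof -
  have False if "p = k \<or> p = l" "x = p \<or> y = p" for p
    using Dn_arc_unique[OF assms(1) assms(3) assms(2), of p] that assms(4) by auto
  then show ?thesis by blast
qed

lemma finite_Dn: "finite (Dn n)"
proof (rule finite_subset)
  show "Dn n \<subseteq> Pow ({1..2 * n} \<times> {1..2 * n})"
  proof (intro subsetI PowI)
    fix \<delta> e assume "\<delta> \<in> Dn n" "e \<in> \<delta>"
    then show "e \<in> {1..2 * n} \<times> {1..2 * n}"
      using Dn_arcD[of \<delta> n "fst e" "snd e"] by (simp add: mem_Times_iff)
  qed
qed simp

lemma Dn_0:
  assumes "\<delta> \<in> Dn 0"
  shows "\<delta> = {}"
proof (rule equals0I)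
  fix e assume "e \<in> \<delta>"
  then have "(fst e, snd e) \<in> \<delta>" by simp
  from Dn_arcD[OF assms this] show False by linarith
qed

section \<open>Adding and removing an adjacent arc\<close>

lemma sh_ush: "x \<noteq> k \<Longrightarrow> x \<noteq> k + 1 \<Longrightarrow> sh k (ush k x) = x"
  unfolding sh_def ush_def by auto

lemma ush_sh [simp]: "ush k (sh k x) = x"
  by (simp add: sh_def ush_def)

lemma sh_neq [simp]: "sh k x \<noteq> k" "sh k x \<noteq> k + 1"
  by (auto simp: sh_def)

lemma remove_arc_lk [simp]: "remove_arc k (lk k \<gamma>) = \<gamma>"
proof -
  have "lk k \<gamma> - {(k, k + 1)} = (\<lambda>(i, j). (sh k i, sh k j)) ` \<gamma>"
    unfolding lk_def by auto
  then show ?thesis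
    unfolding remove_arc_def by (force simp: image_image case_prod_beta)
qed

lemma lk_remove_arc:
  assumes "\<delta> \<in> Dn n" "(k, k + 1) \<in> \<delta>"
  shows "lk k (remove_arc k \<delta>) = \<delta>"
proof -
  have "(\<lambda>(i, j). (sh k i, sh k j)) ((\<lambda>(i, j). (ush k i, ush k j)) e) = e"
    if "e \<in> \<delta> - {(k, k + 1)}" for e
    using that Dn_arc_disjoint[OF assms, of "fst e" "snd e"] by (cases e) (simp add: sh_ush)
  then have "(\<lambda>(i, j). (sh k i, sh k j)) ` remove_arc k \<delta> = \<delta> - {(k, k + 1)}"
    unfolding remove_arc_def image_image by simp
  then show ?thesis unfolding lk_def using assms(2) by auto
qed

lemma lk_eq_iff_remove_arc:
  assumes "\<delta> \<in> Dn n" "(k, k + 1) \<in> \<delta>"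
  shows "lk k \<gamma> = \<delta> \<longleftrightarrow> \<gamma> = remove_arc k \<delta>"
  using lk_remove_arc[OF assms] remove_arc_lk by metis

lemma remove_arc_lk_commute:
  assumes \<gamma>: "\<gamma> \<in> Dn n" "(b, b + 1) \<in> \<gamma>" and "b + 1 < k"
  shows "remove_arc b (lk k \<gamma>) = lk (k - 2) (remove_arc b \<gamma>)"
proof -
  let ?F = "\<lambda>(i, j). (sh k i, sh k j)"
  let ?G = "\<lambda>(i, j). (ush b i, ush b j)"
  let ?F' = "\<lambda>(i, j). (sh (k - 2) i, sh (k - 2) j)"
  have "inj ?F" by (rule injI) (auto simp: sh_def split: if_splits)
  then have "?F ` (\<gamma> - {(b, b + 1)}) = ?F ` \<gamma> - ?F ` {(b, b + 1)}" by (rule image_set_diff)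
  also have "?F ` {(b, b + 1)} = {(b, b + 1)}" using \<open>b + 1 < k\<close> by (simp add: sh_def)
  finally have "lk k \<gamma> - {(b, b + 1)} = insert (k, k + 1) (?F ` (\<gamma> - {(b, b + 1)}))"
    unfolding lk_def using \<open>b + 1 < k\<close> by auto
  then have "remove_arc b (lk k \<gamma>) = insert (?G (k, k + 1)) (?G ` ?F ` (\<gamma> - {(b, b + 1)}))"
    unfolding remove_arc_def by simp
  also have "?G (k, k + 1) = (k - 2, k - 2 + 1)" using \<open>b + 1 < k\<close> by (auto simp: ush_def)
  also have "?G ` ?F ` (\<gamma> - {(b, b + 1)}) = ?F' ` ?G ` (\<gamma> - {(b, b + 1)})"
    unfolding image_image
  proof (rule image_cong[OF refl])
    fix e assume "e \<in> \<gamma> - {(b, b + 1)}"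
    then show "?G (?F e) = ?F' (?G e)"
      using Dn_arc_disjoint[OF \<gamma>, of "fst e" "snd e"] \<open>b + 1 < k\<close>
      by (cases e) (auto simp: sh_def ush_def)
  qed
  finally show ?thesis unfolding lk_def remove_arc_def by simp
qed

lemma Dn_Suc_adjacent_arc:
  assumes \<delta>: "\<delta> \<in> Dn (Suc n)"
  shows "\<exists>k. (k, k + 1) \<in> \<delta>"
proof (rule ccontr)
  assume no_adjacent: "\<nexists>k. (k, k + 1) \<in> \<delta>"
  obtain e0 where "e0 \<in> \<delta>" using Dn_point_covered[OF \<delta>, of 1] by auto
  then obtain e where "e \<in> \<delta>" and shortest: "\<And>e'. e' \<in> \<delta> \<Longrightarrow> snd e - fst e \<le> snd e' - fst e'"
    using ex_has_least_nat[of "\<lambda>e. e \<in> \<delta>" e0 "\<lambda>e. snd e - fst e"] by blast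
  obtain i j where e: "e = (i, j)" by (cases e)
  with \<open>e \<in> \<delta>\<close> have ij: "(i, j) \<in> \<delta>" by simp
  have "i < j" "j \<le> 2 * Suc n" using Dn_arcD[OF \<delta> ij] by auto
  moreover have "j \<noteq> i + 1" using ij no_adjacent by blast
  ultimately have "i + 1 < j" by linarith
  then obtain c d where cd: "(c, d) \<in> \<delta>" "c = i + 1 \<or> d = i + 1"
    using Dn_point_covered[OF \<delta>, of "i + 1"] \<open>j \<le> 2 * Suc n\<close> by fastforce
  have "c < d" using Dn_arcD[OF \<delta> cd(1)] by simp
  have "(c, d) \<noteq> (i, j)" using cd(2) \<open>i + 1 < j\<close> by (cases "c = i + 1") simp_all
  then have disjoint: "c \<noteq> i \<and> d \<noteq> j" using Dn_arc_disjoint[OF \<delta> ij cd(1)] by blast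
  from cd(2) show False
  proof
    assume "c = i + 1"
    then have "d < j" using Dn_noncrossing[OF \<delta> ij cd(1)] disjoint \<open>i + 1 < j\<close> by linarith
    then have "d - c < j - i" using \<open>c = i + 1\<close> \<open>c < d\<close> by linarith
    then show False using shortest[OF cd(1)] e by simp
  next
    assume "d = i + 1"
    then have "c < i" using \<open>c < d\<close> disjoint by linarith
    then show False using Dn_noncrossing[OF \<delta> cd(1) ij] \<open>d = i + 1\<close> \<open>i + 1 < j\<close> by linarith
  qed
qed

lemma remove_arc_memE:
  assumes "e \<in> remove_arc k \<delta>"
  obtains x y where "(x, y) \<in> \<delta>" "(x, y) \<noteq> (k, k + 1)" "e = (ush k x, ush k y)"
  using assms unfolding remove_arc_def by auto

lemma ush_less_iff:
  "x \<noteq> k \<Longrightarrow> x \<noteq> k + 1 \<Longrightarrow> y \<noteq> k \<Longrightarrow> y \<noteq> k + 1 \<Longrightarrow> ush k x < ush k y \<longleftrightarrow> x < y"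
  unfolding ush_def by auto

lemma ush_eq_iff:
  "x \<noteq> k \<Longrightarrow> x \<noteq> k + 1 \<Longrightarrow> y \<noteq> k \<Longrightarrow> y \<noteq> k + 1 \<Longrightarrow> ush k x = ush k y \<longleftrightarrow> x = y"
  unfolding ush_def by auto

lemma remove_arc_in_Dn:
  assumes \<delta>: "\<delta> \<in> Dn (Suc n)" and k: "(k, k + 1) \<in> \<delta>"
  shows "remove_arc k \<delta> \<in> Dn n"
proof -
  have k_bounds: "1 \<le> k" "k + 1 \<le> 2 * Suc n" using Dn_arcD[OF \<delta> k] by auto
  have other: "x \<noteq> k \<and> x \<noteq> k + 1 \<and> y \<noteq> k \<and> y \<noteq> k + 1 \<and> 1 \<le> x \<and> x < y \<and> y \<le> 2 * Suc n"
    if "(x, y) \<in> \<delta>" "(x, y) \<noteq> (k, k + 1)" for x y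
    using Dn_arc_disjoint[OF \<delta> k that] Dn_arcD[OF \<delta> that(1)] by blast
  show ?thesis
  proof (rule DnI)
    fix i j assume "(i, j) \<in> remove_arc k \<delta>"
    then obtain x y where xy: "(x, y) \<in> \<delta>" "(x, y) \<noteq> (k, k + 1)" "(i, j) = (ush k x, ush k y)"
      by (rule remove_arc_memE)
    then show "1 \<le> i \<and> i < j \<and> j \<le> 2 * n" using other[OF xy(1,2)] k_bounds unfolding ush_def by auto
  next
    fix p assume "1 \<le> p" "p \<le> 2 * n"
    then have "1 \<le> sh k p" "sh k p \<le> 2 * Suc n" using k_bounds by (auto simp: sh_def)
    then obtain x y where xy: "(x, y) \<in> \<delta>" "x = sh k p \<or> y = sh k p"
      using Dn_point_covered[OF \<delta>] by fastforce
    then have "(x, y) \<noteq> (k, k + 1)" by (metis Pair_inject sh_neq)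
    with xy(1) have "(ush k x, ush k y) \<in> remove_arc k \<delta>" unfolding remove_arc_def by force
    moreover have "ush k x = p \<or> ush k y = p" using xy(2) by auto
    ultimately show "\<exists>e\<in>remove_arc k \<delta>. fst e = p \<or> snd e = p" by force
  next
    fix e1 e2 p
    assume "e1 \<in> remove_arc k \<delta>" "e2 \<in> remove_arc k \<delta>"
      and p: "fst e1 = p \<or> snd e1 = p" "fst e2 = p \<or> snd e2 = p"
    then obtain x1 y1 x2 y2 where
      1: "(x1, y1) \<in> \<delta>" "(x1, y1) \<noteq> (k, k + 1)" "e1 = (ush k x1, ush k y1)" and
      2: "(x2, y2) \<in> \<delta>" "(x2, y2) \<noteq> (k, k + 1)" "e2 = (ush k x2, ush k y2)"
      by (metis remove_arc_memE)
    obtain z1 z2 where "z1 = x1 \<or> z1 = y1" "z2 = x2 \<or> z2 = y2" "ush k z1 = p" "ush k z2 = p"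
      using p 1(3) 2(3) by auto
    moreover from this have "z1 = z2" using ush_eq_iff[of z1 k z2] other[OF 1(1,2)] other[OF 2(1,2)] by auto
    ultimately have "(x1, y1) = (x2, y2)" using Dn_arc_unique[OF \<delta> 1(1) 2(1), of z1] by auto
    then show "e1 = e2" using 1(3) 2(3) by simp
  next
    fix a b c d assume "(a, c) \<in> remove_arc k \<delta>" "(b, d) \<in> remove_arc k \<delta>"
    then obtain x1 y1 x2 y2 where
      1: "(x1, y1) \<in> \<delta>" "(x1, y1) \<noteq> (k, k + 1)" "(a, c) = (ush k x1, ush k y1)" and
      2: "(x2, y2) \<in> \<delta>" "(x2, y2) \<noteq> (k, k + 1)" "(b, d) = (ush k x2, ush k y2)"
      by (metis remove_arc_memE)
    have "\<not> (x1 < x2 \<and> x2 < y1 \<and> y1 < y2)" using Dn_noncrossing[OF \<delta> 1(1) 2(1)] .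
    then show "\<not> (a < b \<and> b < c \<and> c < d)"
      using 1(3) 2(3) other[OF 1(1,2)] other[OF 2(1,2)] ush_less_iff[of _ k] by auto
  qed
qed

section \<open>Restricted sequences\<close>

definition first_adjacent :: "diagram \<Rightarrow> nat" where
  "first_adjacent \<delta> = (LEAST k. (k, k + 1) \<in> \<delta>)"

lemma first_adjacent_in:
  assumes "\<delta> \<in> Dn (Suc n)"
  shows "(first_adjacent \<delta>, first_adjacent \<delta> + 1) \<in> \<delta>"
  using Dn_Suc_adjacent_arc[OF assms] unfolding first_adjacent_def by (metis LeastI)

lemma first_adjacent_le: "(k, k + 1) \<in> \<delta> \<Longrightarrow> first_adjacent \<delta> \<le> k"
  unfolding first_adjacent_def by (rule Least_le)

lemma first_adjacent_eqI:
  "(k, k + 1) \<in> \<delta> \<Longrightarrow> (\<And>i. (i, i + 1) \<in> \<delta> \<Longrightarrow> k \<le> i) \<Longrightarrow> first_adjacent \<delta> = k"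
  unfolding first_adjacent_def by (rule Least_equality) auto

lemma rseq_Suc: "rseq (Suc n) \<delta> = first_adjacent \<delta> # rseq n (remove_arc (first_adjacent \<delta>) \<delta>)"
  by (simp add: first_adjacent_def Let_def)

declare rseq.simps(2) [simp del]

lemma length_rseq [simp]: "length (rseq n \<delta>) = n"
  by (induction n arbitrary: \<delta>) (simp_all add: rseq_Suc)

lemma adjacent_lk_iff:
  assumes "\<gamma> \<in> Dn n"
  shows "(i, i + 1) \<in> lk k \<gamma> \<longleftrightarrow>
    i = k \<or> (i + 1 < k \<and> (i, i + 1) \<in> \<gamma>) \<or> (k + 2 \<le> i \<and> (i - 2, i - 1) \<in> \<gamma>)"
proof -
  have "(\<exists>(x, y)\<in>\<gamma>. sh k x = i \<and> sh k y = i + 1) \<longleftrightarrow>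
    (i + 1 < k \<and> (i, i + 1) \<in> \<gamma>) \<or> (k + 2 \<le> i \<and> (i - 2, i - 1) \<in> \<gamma>)"
  proof
    assume "\<exists>(x, y)\<in>\<gamma>. sh k x = i \<and> sh k y = i + 1"
    then obtain x y where xy: "(x, y) \<in> \<gamma>" "sh k x = i" "sh k y = i + 1" by blast
    moreover have "x < y" using Dn_arcD[OF assms xy(1)] by simp
    ultimately show "(i + 1 < k \<and> (i, i + 1) \<in> \<gamma>) \<or> (k + 2 \<le> i \<and> (i - 2, i - 1) \<in> \<gamma>)"
      by (auto simp: sh_def split: if_splits)
  next
    assume "(i + 1 < k \<and> (i, i + 1) \<in> \<gamma>) \<or> (k + 2 \<le> i \<and> (i - 2, i - 1) \<in> \<gamma>)"
    then show "\<exists>(x, y)\<in>\<gamma>. sh k x = i \<and> sh k y = i + 1"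
    proof
      assume "i + 1 < k \<and> (i, i + 1) \<in> \<gamma>"
      then show ?thesis by (intro bexI[of _ "(i, i + 1)"]) (auto simp: sh_def)
    next
      assume "k + 2 \<le> i \<and> (i - 2, i - 1) \<in> \<gamma>"
      then show ?thesis by (intro bexI[of _ "(i - 2, i - 1)"]) (auto simp: sh_def)
    qed
  qed
  moreover have "(i, i + 1) \<in> (\<lambda>(x, y). (sh k x, sh k y)) ` \<gamma> \<longleftrightarrow>
    (\<exists>(x, y)\<in>\<gamma>. sh k x = i \<and> sh k y = i + 1)"
    by force
  ultimately show ?thesis unfolding lk_def by auto
qed

lemma first_adjacent_lk:
  assumes \<gamma>: "\<gamma> \<in> Dn (Suc n)"
  shows "first_adjacent (lk k \<gamma>) = (if first_adjacent \<gamma> + 1 < k then first_adjacent \<gamma> else k)"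
proof -
  let ?b = "first_adjacent \<gamma>"
  have b: "(?b, ?b + 1) \<in> \<gamma>" using first_adjacent_in[OF \<gamma>] .
  have b_le: "?b \<le> i" if "(i, i + 1) \<in> \<gamma>" for i using first_adjacent_le[OF that] .
  have adjacent: "i = k \<or> (i + 1 < k \<and> ?b \<le> i) \<or> k + 2 \<le> i" if "(i, i + 1) \<in> lk k \<gamma>" for i
    using that b_le unfolding adjacent_lk_iff[OF \<gamma>] by blast
  show ?thesis
  proof (cases "?b + 1 < k")
    case True
    have "first_adjacent (lk k \<gamma>) = ?b"
    proof (rule first_adjacent_eqI)
      show "(?b, ?b + 1) \<in> lk k \<gamma>" using True b unfolding adjacent_lk_iff[OF \<gamma>] by blast
    qed (use True adjacent in fastforce)
    with True show ?thesis by simp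
  next
    case False
    have "first_adjacent (lk k \<gamma>) = k"
    proof (rule first_adjacent_eqI)
      show "(k, k + 1) \<in> lk k \<gamma>" unfolding lk_def by simp
    qed (use False adjacent in fastforce)
    with False show ?thesis by simp
  qed
qed

fun rs_insert :: "nat \<Rightarrow> nat list \<Rightarrow> nat list" where
  "rs_insert k [] = [k]"
| "rs_insert k (b # bs) = (if b + 1 < k then b # rs_insert (k - 2) bs else k # b # bs)"

lemma rseq_lk: "\<gamma> \<in> Dn n \<Longrightarrow> rseq (Suc n) (lk k \<gamma>) = rs_insert k (rseq n \<gamma>)"
proof (induction n arbitrary: \<gamma> k)
  case 0
  then have "lk k \<gamma> = {(k, k + 1)}" unfolding lk_def Dn_0[OF 0] by simp
  then have "first_adjacent (lk k \<gamma>) = k" by (intro first_adjacent_eqI) auto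
  then show ?case by (simp add: rseq_Suc)
next
  case (Suc m)
  let ?b = "first_adjacent \<gamma>"
  have b: "(?b, ?b + 1) \<in> \<gamma>" using first_adjacent_in[OF Suc.prems] .
  have removed: "remove_arc ?b \<gamma> \<in> Dn m" using remove_arc_in_Dn[OF Suc.prems b] .
  show ?case
  proof (cases "?b + 1 < k")
    case True
    have "rseq (Suc (Suc m)) (lk k \<gamma>) = ?b # rseq (Suc m) (remove_arc ?b (lk k \<gamma>))"
      using rseq_Suc[of "Suc m" "lk k \<gamma>"] first_adjacent_lk[OF Suc.prems, of k] True by simp
    also have "remove_arc ?b (lk k \<gamma>) = lk (k - 2) (remove_arc ?b \<gamma>)"
      using remove_arc_lk_commute[OF Suc.prems b True] .
    also have "rseq (Suc m) \<dots> = rs_insert (k - 2) (rseq m (remove_arc ?b \<gamma>))"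
      using Suc.IH[OF removed] .
    finally show ?thesis using True rseq_Suc[of m \<gamma>] by simp
  next
    case False
    then show ?thesis
      using rseq_Suc[of "Suc m" "lk k \<gamma>"] rseq_Suc[of m \<gamma>] first_adjacent_lk[OF Suc.prems, of k] by simp
  qed
qed

fun restricted :: "nat list \<Rightarrow> bool" where
  "restricted [] = True"
| "restricted [a] = (a = 1)"
| "restricted (a # b # r) = (1 \<le> a \<and> a \<le> b + 1 \<and> restricted (b # r))"

lemma rseq_restricted: "\<delta> \<in> Dn n \<Longrightarrow> restricted (rseq n \<delta>)"
proof (induction n arbitrary: \<delta>)
  case 0
  then show ?case by simp
next
  case (Suc m)
  let ?k = "first_adjacent \<delta>"
  let ?\<delta>' = "remove_arc ?k \<delta>"
  have k: "(?k, ?k + 1) \<in> \<delta>" using first_adjacent_in[OF Suc.prems] .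
  have k_bounds: "1 \<le> ?k" "?k + 1 \<le> 2 * Suc m" using Dn_arcD[OF Suc.prems k] by auto
  have \<delta>': "?\<delta>' \<in> Dn m" using remove_arc_in_Dn[OF Suc.prems k] .
  have "restricted (rseq m ?\<delta>')" using Suc.IH[OF \<delta>'] .
  moreover have "?k \<le> first_adjacent ?\<delta>' + 1" if "m = Suc m'" for m'
  proof -
    have "?k = first_adjacent (lk ?k ?\<delta>')" using lk_remove_arc[OF Suc.prems k] by simp
    also have "\<dots> = (if first_adjacent ?\<delta>' + 1 < ?k then first_adjacent ?\<delta>' else ?k)"
      using first_adjacent_lk \<delta>' that by blast
    finally show ?thesis by (auto split: if_splits)
  qed
  ultimately show ?case using k_bounds by (cases m) (simp_all add: rseq_Suc)
qed

lemma rseq_inj: "\<delta>1 \<in> Dn n \<Longrightarrow> \<delta>2 \<in> Dn n \<Longrightarrow> rseq n \<delta>1 = rseq n \<delta>2 \<Longrightarrow> \<delta>1 = \<delta>2"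
proof (induction n arbitrary: \<delta>1 \<delta>2)
  case 0
  then show ?case using Dn_0 by blast
next
  case (Suc m)
  let ?k = "first_adjacent \<delta>1"
  have k: "(?k, ?k + 1) \<in> \<delta>1" "(?k, ?k + 1) \<in> \<delta>2" "first_adjacent \<delta>2 = ?k"
    using first_adjacent_in[OF Suc.prems(1)] first_adjacent_in[OF Suc.prems(2)] Suc.prems(3)
    by (auto simp: rseq_Suc)
  have "remove_arc ?k \<delta>1 = remove_arc ?k \<delta>2"
    using Suc.IH[OF remove_arc_in_Dn[OF Suc.prems(1) k(1)] remove_arc_in_Dn[OF Suc.prems(2) k(2)]]
      Suc.prems(3) k(3) by (simp add: rseq_Suc)
  then show ?case using lk_remove_arc[OF Suc.prems(1) k(1)] lk_remove_arc[OF Suc.prems(2) k(2)] by metis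
qed

lemma edia_rseq: "\<delta> \<in> Dn n \<Longrightarrow> edia (rseq n \<delta>) = \<delta>"
  unfolding edia_def length_rseq by (rule the_equality) (simp, metis rseq_inj)

lemma lin_l_apply:
  assumes \<delta>: "\<delta> \<in> Dn (Suc n)"
  shows "lin_l n k v \<delta> = (if (k, k + 1) \<in> \<delta> then v (remove_arc k \<delta>) else 0)"
proof (cases "(k, k + 1) \<in> \<delta>")
  case True
  have "lin_l n k v \<delta> = (\<Sum>\<gamma>\<in>Dn n. if \<gamma> = remove_arc k \<delta> then v \<gamma> else 0)"
    unfolding lin_l_def lk_eq_iff_remove_arc[OF \<delta> True] ..
  also have "\<dots> = v (remove_arc k \<delta>)"
    using remove_arc_in_Dn[OF \<delta> True] finite_Dn by (simp add: sum.delta')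
  finally show ?thesis using True by simp
next
  case False
  then have "lk k \<gamma> \<noteq> \<delta>" for \<gamma> unfolding lk_def by auto
  then show ?thesis unfolding lin_l_def using False by simp
qed

lemma rs_insert_le:
  "list_all2 (\<le>) s r \<Longrightarrow> restricted (a # r) \<Longrightarrow> k \<le> a \<Longrightarrow> list_all2 (\<le>) (rs_insert k s) (a # r)"
proof (induction s arbitrary: k a r)
  case Nil
  then show ?case by simp
next
  case (Cons x xs)
  then obtain y ys where r: "r = y # ys" "x \<le> y" "list_all2 (\<le>) xs ys"
    by (auto simp: list_all2_Cons1)
  with Cons.prems(2,3) have "list_all2 (\<le>) (rs_insert (k - 2) xs) (y # ys)" if "x + 1 < k"
    using Cons.IH[of ys y "k - 2"] that by auto
  then show ?case using Cons.prems r by auto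
qed

lemma minus_one_power_sum_rs_insert:
  "(-1 :: 'a :: comm_ring_1) ^ sum_list (rs_insert k s) = (-1) ^ (k + sum_list s)"
proof (induction s arbitrary: k)
  case Nil
  then show ?case by simp
next
  case (Cons b bs)
  show ?case
  proof (cases "b + 1 < k")
    case True
    define m where "m = k - 2"
    then have k: "k = m + 2" using True by simp
    have "(-1 :: 'a) ^ sum_list (rs_insert k (b # bs)) = (-1) ^ b * (-1) ^ (m + sum_list bs)"
      using True Cons.IH[of m] by (simp add: m_def power_add)
    also have "\<dots> = (-1) ^ (k + sum_list (b # bs))" by (simp add: k power_add mult.left_commute)
    finally show ?thesis .
  next
    case False
    then show ?thesis by (simp add: algebra_simps)
  qed
qed

section \<open>Signs of the coefficients of e'\<close>

text \<open>\<open>Qq\<close> is ordered as the fraction field of the ordered ring \<open>rat poly\<close> (sign of the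
  leading coefficient), so q exceeds every rational and all \<open>Delta k\<close> are positive.\<close>

lemma two_le_qq: "(2 :: Qq) \<le> qq"
proof -
  have two_poly: "(2 :: rat poly) = [:2:]" using of_nat_poly[of 2] by simp
  have two_fract: "(2 :: Qq) = Fract 2 1" using of_nat_fract[of 2] by simp
  have "[:0, 1:] - 2 = ([:-2, 1:] :: rat poly)" by (simp only: two_poly) simp
  moreover have "(0 :: rat poly) < [:-2, 1:]" by (simp add: less_poly_def pos_poly_pCons)
  ultimately have "0 \<le> qq - 2" unfolding qq_def two_fract by (simp add: zero_le_Fract_iff)
  then show ?thesis by simp
qed

lemma one_le_Delta_mono: "1 \<le> Delta k \<and> Delta k \<le> Delta (Suc k)"
proof (induction k)
  case 0
  then show ?case using two_le_qq by simp
next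
  case (Suc k)
  have "2 * Delta (Suc k) \<le> qq * Delta (Suc k)"
    using two_le_qq Suc.IH by (intro mult_right_mono) auto
  moreover have "Delta (Suc (Suc k)) = qq * Delta (Suc k) - Delta k" by simp
  ultimately show ?case using Suc.IH by linarith
qed

lemma Delta_pos: "0 < Delta k"
  using one_le_Delta_mono[of k] by linarith

definition signed_coeff :: "nat list \<Rightarrow> diagram \<Rightarrow> Qq" where
  "signed_coeff \<alpha> \<delta> = (-1) ^ (sum_list \<alpha> + sum_list (rseq (length \<alpha>) \<delta>)) * eprime \<alpha> \<delta>"

definition sign_pattern :: "nat list \<Rightarrow> bool" where
  "sign_pattern \<alpha> \<longleftrightarrow> (\<forall>\<delta>\<in>Dn (length \<alpha>).
     0 \<le> signed_coeff \<alpha> \<delta> \<and> (0 < signed_coeff \<alpha> \<delta> \<longleftrightarrow> list_all2 (\<le>) (rseq (length \<alpha>) \<delta>) \<alpha>))"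

lemma signed_lin_l_eprime:
  assumes \<delta>: "\<delta> \<in> Dn (Suc (length r))"
  shows "(-1) ^ (sum_list (a # r) + sum_list (rseq (Suc (length r)) \<delta>)) * lin_l (length r) a (eprime r) \<delta>
    = (if (a, a + 1) \<in> \<delta> then signed_coeff r (remove_arc a \<delta>) else 0)"
proof (cases "(a, a + 1) \<in> \<delta>")
  case True
  let ?\<gamma> = "remove_arc a \<delta>"
  have "rseq (Suc (length r)) \<delta> = rs_insert a (rseq (length r) ?\<gamma>)"
    using rseq_lk[OF remove_arc_in_Dn[OF \<delta> True], of a] lk_remove_arc[OF \<delta> True] by simp
  then have "(-1 :: Qq) ^ (sum_list (a # r) + sum_list (rseq (Suc (length r)) \<delta>))
      = (-1) ^ (a + a) * (-1) ^ (sum_list r + sum_list (rseq (length r) ?\<gamma>))"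
    by (simp add: power_add minus_one_power_sum_rs_insert algebra_simps)
  also have "(-1 :: Qq) ^ (a + a) = 1" by (simp flip: mult_2)
  finally show ?thesis using True by (simp add: lin_l_apply[OF \<delta>] signed_coeff_def)
next
  case False
  then show ?thesis by (simp add: lin_l_apply[OF \<delta>])
qed

lemma signed_coeff_Cons:
  assumes \<delta>: "\<delta> \<in> Dn (Suc (length r))" and "r \<noteq> []" "1 \<le> a"
  shows "signed_coeff (a # r) \<delta> =
    (if (a, a + 1) \<in> \<delta> then signed_coeff r (remove_arc a \<delta>) else 0) +
    (if 2 \<le> a then Delta (a - 2) / Delta (a - 1) * signed_coeff ((a - 1) # r) \<delta> else 0)"
proof -
  obtain b rest where r: "r = b # rest" using \<open>r \<noteq> []\<close> by (cases r) auto
  let ?\<rho> = "rseq (Suc (length r)) \<delta>"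
  let ?\<epsilon> = "(-1 :: Qq) ^ (sum_list (a # r) + sum_list ?\<rho>)"
  have "signed_coeff (a # r) \<delta> = ?\<epsilon> * lin_l (length r) a (eprime r) \<delta> +
    (if 2 \<le> a then - ?\<epsilon> * (Delta (a - 2) / Delta (a - 1) * eprime ((a - 1) # r) \<delta>) else 0)"
    using \<open>1 \<le> a\<close> unfolding signed_coeff_def r by (cases "a = 1") (auto simp: algebra_simps)
  also have "?\<epsilon> * lin_l (length r) a (eprime r) \<delta> =
    (if (a, a + 1) \<in> \<delta> then signed_coeff r (remove_arc a \<delta>) else 0)"
    by (rule signed_lin_l_eprime[OF \<delta>])
  also have "- ?\<epsilon> = (-1) ^ (sum_list ((a - 1) # r) + sum_list ?\<rho>)" if "2 \<le> a"
  proof -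
    have "sum_list (a # r) + sum_list ?\<rho> = Suc (sum_list ((a - 1) # r) + sum_list ?\<rho>)"
      using that by simp
    then show ?thesis by (simp only: power_Suc)
  qed
  then have "(if 2 \<le> a then - ?\<epsilon> * (Delta (a - 2) / Delta (a - 1) * eprime ((a - 1) # r) \<delta>) else 0) =
    (if 2 \<le> a then Delta (a - 2) / Delta (a - 1) * signed_coeff ((a - 1) # r) \<delta> else 0)"
    by (simp add: signed_coeff_def)
  finally show ?thesis .
qed

lemma sign_pattern_adjacent_term:
  assumes r: "sign_pattern r" and "restricted (a # r)" and \<delta>: "\<delta> \<in> Dn (Suc (length r))"
  defines "t \<equiv> if (a, a + 1) \<in> \<delta> then signed_coeff r (remove_arc a \<delta>) else 0"
  shows "0 \<le> t"
    and "0 < t \<Longrightarrow> list_all2 (\<le>) (rseq (Suc (length r)) \<delta>) (a # r)"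
    and "rseq (Suc (length r)) \<delta> = a # \<beta> \<Longrightarrow> list_all2 (\<le>) \<beta> r \<Longrightarrow> 0 < t"
proof -
  have pattern: "0 \<le> signed_coeff r (remove_arc a \<delta>) \<and>
      (0 < signed_coeff r (remove_arc a \<delta>) \<longleftrightarrow> list_all2 (\<le>) (rseq (length r) (remove_arc a \<delta>)) r)"
    if "(a, a + 1) \<in> \<delta>"
    using r remove_arc_in_Dn[OF \<delta> that] unfolding sign_pattern_def by blast
  show "0 \<le> t" using pattern unfolding t_def by auto
  show "list_all2 (\<le>) (rseq (Suc (length r)) \<delta>) (a # r)" if "0 < t"
  proof -
    have a: "(a, a + 1) \<in> \<delta>" using that unfolding t_def by (auto split: if_splits)
    then have "list_all2 (\<le>) (rseq (length r) (remove_arc a \<delta>)) r"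
      using pattern that unfolding t_def by auto
    moreover have "rseq (Suc (length r)) \<delta> = rs_insert a (rseq (length r) (remove_arc a \<delta>))"
      using rseq_lk[OF remove_arc_in_Dn[OF \<delta> a], of a] lk_remove_arc[OF \<delta> a] by simp
    ultimately show ?thesis using rs_insert_le \<open>restricted (a # r)\<close> by simp
  qed
  show "0 < t" if "rseq (Suc (length r)) \<delta> = a # \<beta>" "list_all2 (\<le>) \<beta> r"
  proof -
    have "first_adjacent \<delta> = a" "\<beta> = rseq (length r) (remove_arc a \<delta>)"
      using that(1) by (auto simp: rseq_Suc)
    moreover from this have "(a, a + 1) \<in> \<delta>" using first_adjacent_in[OF \<delta>] by simp
    ultimately show ?thesis using pattern that(2) unfolding t_def by simp
  qed
qed

lemma sign_pattern_Cons:
  assumes r: "sign_pattern r" and "r \<noteq> []" and restricted: "restricted (a # r)"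
    and IH: "2 \<le> a \<Longrightarrow> sign_pattern ((a - 1) # r)"
  shows "sign_pattern (a # r)"
  unfolding sign_pattern_def
proof
  fix \<delta> assume "\<delta> \<in> Dn (length (a # r))"
  then have \<delta>: "\<delta> \<in> Dn (Suc (length r))" by simp
  have "1 \<le> a" using restricted \<open>r \<noteq> []\<close> by (cases r) auto
  define t where "t = (if (a, a + 1) \<in> \<delta> then signed_coeff r (remove_arc a \<delta>) else 0)"
  define u where "u = (if 2 \<le> a then Delta (a - 2) / Delta (a - 1) * signed_coeff ((a - 1) # r) \<delta> else 0)"
  obtain x \<beta> where \<rho>: "rseq (Suc (length r)) \<delta> = x # \<beta>" and "1 \<le> x"
    using rseq_Suc[of "length r" \<delta>] Dn_arcD[OF \<delta> first_adjacent_in[OF \<delta>]] by simp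
  have sc: "signed_coeff (a # r) \<delta> = t + u"
    unfolding t_def u_def using signed_coeff_Cons[OF \<delta> \<open>r \<noteq> []\<close> \<open>1 \<le> a\<close>] .
  note t = sign_pattern_adjacent_term[OF r restricted \<delta>, folded t_def]
  have u: "0 \<le> u \<and> (0 < u \<longleftrightarrow> 2 \<le> a \<and> x \<le> a - 1 \<and> list_all2 (\<le>) \<beta> r)"
  proof (cases "2 \<le> a")
    case True
    define c where "c = Delta (a - 2) / Delta (a - 1)"
    let ?s = "signed_coeff ((a - 1) # r) \<delta>"
    have "u = c * ?s" unfolding u_def c_def using True by simp
    moreover have "0 < c" unfolding c_def using Delta_pos by simp
    moreover have "0 \<le> ?s \<and> (0 < ?s \<longleftrightarrow> x \<le> a - 1 \<and> list_all2 (\<le>) \<beta> r)"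
      using IH[OF True] \<delta> \<rho> unfolding sign_pattern_def by auto
    ultimately show ?thesis using True by (simp add: zero_less_mult_iff)
  qed (simp add: u_def)
  show "0 \<le> signed_coeff (a # r) \<delta> \<and>
    (0 < signed_coeff (a # r) \<delta> \<longleftrightarrow> list_all2 (\<le>) (rseq (length (a # r)) \<delta>) (a # r))"
  proof (intro conjI iffI)
    show "0 \<le> signed_coeff (a # r) \<delta>" using sc t(1) u by simp
  next
    assume "0 < signed_coeff (a # r) \<delta>"
    then have "0 < t \<or> 0 < u" using sc t(1) u by linarith
    then show "list_all2 (\<le>) (rseq (length (a # r)) \<delta>) (a # r)" using t(2) u \<rho> by auto
  next
    assume "list_all2 (\<le>) (rseq (length (a # r)) \<delta>) (a # r)"
    then have "x \<le> a" "list_all2 (\<le>) \<beta> r" using \<rho> by simp_all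
    then have "0 < t \<or> 0 < u" using t(3) u \<rho> \<open>1 \<le> x\<close> by (cases "x = a") auto
    then show "0 < signed_coeff (a # r) \<delta>" using sc t(1) u by linarith
  qed
qed

lemma sign_pattern_singleton: "sign_pattern [1]"
  unfolding sign_pattern_def
proof
  fix \<delta> assume "\<delta> \<in> Dn (length [1 :: nat])"
  then have \<delta>: "\<delta> \<in> Dn (Suc 0)" by simp
  have "first_adjacent \<delta> = 1"
    using Dn_arcD[OF \<delta> first_adjacent_in[OF \<delta>]] by simp
  then have "rseq 1 \<delta> = [1]" by (simp add: rseq_Suc)
  moreover from this have "edia [1] = \<delta>" using edia_rseq[OF \<delta>] by simp
  ultimately show "0 \<le> signed_coeff [1] \<delta> \<and>
    (0 < signed_coeff [1] \<delta> \<longleftrightarrow> list_all2 (\<le>) (rseq (length [1 :: nat]) \<delta>) [1])"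
    by (simp add: signed_coeff_def basis_def)
qed

lemma restricted_sign_pattern: "restricted \<alpha> \<Longrightarrow> \<alpha> \<noteq> [] \<Longrightarrow> sign_pattern \<alpha>"
proof (induction \<alpha> rule: eprime.induct)
  case 1
  then show ?case by simp
next
  case (2 a)
  then show ?case using sign_pattern_singleton by simp
next
  case (3 a b rest)
  have "restricted (b # rest)" using "3.prems"(1) by simp
  then have "sign_pattern (b # rest)" using "3.IH"(1,3) by blast
  moreover have "sign_pattern ((a - 1) # b # rest)" if "2 \<le> a"
  proof -
    have "restricted ((a - 1) # b # rest)" using that "3.prems"(1) by auto
    then show ?thesis using "3.IH"(2)[OF that] by simp
  qed
  ultimately show ?case using sign_pattern_Cons "3.prems"(1) by blast
qed

theorem mainTheorem10:
  fixes n :: nat and \<alpha> :: "nat list"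
  assumes "1 \<le> n" and "\<alpha> \<in> RS n"
  shows "\<forall>\<beta>\<in>RS n. (eprime \<alpha> (edia \<beta>) \<noteq> 0 \<longleftrightarrow> list_all2 (\<le>) \<beta> \<alpha>)"
proof
  fix \<beta> assume "\<beta> \<in> RS n"
  then obtain \<delta> where \<delta>: "\<delta> \<in> Dn n" "\<beta> = rseq n \<delta>" unfolding RS_def by blast
  from \<open>\<alpha> \<in> RS n\<close> obtain \<delta>' where "\<delta>' \<in> Dn n" "\<alpha> = rseq n \<delta>'" unfolding RS_def by blast
  then have "restricted \<alpha>" "length \<alpha> = n" using rseq_restricted by simp_all
  then have "sign_pattern \<alpha>" using restricted_sign_pattern \<open>1 \<le> n\<close> by (metis list.size(3) not_one_le_zero)
  then have "0 \<le> signed_coeff \<alpha> \<delta> \<and> (0 < signed_coeff \<alpha> \<delta> \<longleftrightarrow> list_all2 (\<le>) \<beta> \<alpha>)"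
    using \<delta> \<open>length \<alpha> = n\<close> unfolding sign_pattern_def by blast
  moreover have "signed_coeff \<alpha> \<delta> = 0 \<longleftrightarrow> eprime \<alpha> \<delta> = 0" unfolding signed_coeff_def by simp
  ultimately show "eprime \<alpha> (edia \<beta>) \<noteq> 0 \<longleftrightarrow> list_all2 (\<le>) \<beta> \<alpha>"
    using edia_rseq \<delta> by auto
qed

end
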